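(* Let $G$ be a finite GVZ-group. Then $U(G)=K(G)$. In particular, this holds if $G$ has nilpotence class $2$.
   Context: For $\chi\in\mathrm{Irr}(G)$, the center of $\chi$ is $Z(\chi)=\{g\in G : |\chi(g)|=\chi(1)\}$. $G$ is a GVZ-group if every $\chi\in\mathrm{Irr}(G)$ vanishes on $G\setminus Z(\chi)$. For a nonabelian group $G$, let $\mathcal{X}=\{\chi\in\mathrm{Irr}(G) : Z(\chi)>Z(G)\}$ (strict containment) and define $K(G)=\bigcap_{\chi\in\mathcal{X}}\ker(\chi)$; if $G$ is abelian, set $K(G)=G$. For a normal subgroup $H$ of $G$, $\mathrm{Irr}(G\mid H)$ is the set of $\chi\in\mathrm{Irr}(G)$ with $H\not\le\ker(\chi)$, and $V(G\mid H)$ is the subgroup generated by all $g\in G$ with $\chi(g)\ne0$ for some $\chi\in\mathrm{Irr}(G\mid H)$ (with $V(G\mid 1)=1$). For a normal subgroup $N$, $U(G\mid N)$ is the product of all normal subgroups $H$ of $G$ with $V(G\mid H)\le N$, and $U(G)=U(G\mid Z(G))$. *)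

theory Defs
  imports "HOL-Algebra.Algebra" "Jordan_Normal_Form.Matrix"
begin

definition is_rep :: "('a, 'b) monoid_scheme \<Rightarrow> nat \<Rightarrow> ('a \<Rightarrow> complex mat) \<Rightarrow> bool" where
  "is_rep G n \<rho> \<longleftrightarrow>
     (\<forall>g \<in> carrier G. \<rho> g \<in> carrier_mat n n) \<and>
     \<rho> \<one>\<^bsub>G\<^esub> = 1\<^sub>m n \<and>
     (\<forall>g \<in> carrier G. \<forall>h \<in> carrier G. \<rho> (g \<otimes>\<^bsub>G\<^esub> h) = \<rho> g * \<rho> h)"

definition invariant_subspace :: "('a, 'b) monoid_scheme \<Rightarrow> nat \<Rightarrow> ('a \<Rightarrow> complex mat) \<Rightarrow> complex vec set \<Rightarrow> bool" where
  "invariant_subspace G n \<rho> W \<longleftrightarrow>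
     W \<subseteq> carrier_vec n \<and> 0\<^sub>v n \<in> W \<and>
     (\<forall>v \<in> W. \<forall>w \<in> W. v + w \<in> W) \<and>
     (\<forall>c. \<forall>v \<in> W. c \<cdot>\<^sub>v v \<in> W) \<and>
     (\<forall>g \<in> carrier G. \<forall>v \<in> W. \<rho> g *\<^sub>v v \<in> W)"

definition irreducible_rep :: "('a, 'b) monoid_scheme \<Rightarrow> nat \<Rightarrow> ('a \<Rightarrow> complex mat) \<Rightarrow> bool" where
  "irreducible_rep G n \<rho> \<longleftrightarrow> is_rep G n \<rho> \<and> n > 0 \<and>
     (\<forall>W. invariant_subspace G n \<rho> W \<longrightarrow> W = {0\<^sub>v n} \<or> W = carrier_vec n)"

definition mat_trace :: "complex mat \<Rightarrow> complex" where
  "mat_trace A = (\<Sum>i<dim_row A. A $$ (i, i))"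

definition Irr :: "('a, 'b) monoid_scheme \<Rightarrow> ('a \<Rightarrow> complex) set" where
  "Irr G = {\<chi>. \<exists>n \<rho>. irreducible_rep G n \<rho> \<and>
              \<chi> = (\<lambda>g. if g \<in> carrier G then mat_trace (\<rho> g) else 0)}"

definition char_center :: "('a, 'b) monoid_scheme \<Rightarrow> ('a \<Rightarrow> complex) \<Rightarrow> 'a set" where
  "char_center G \<chi> = {g \<in> carrier G. cmod (\<chi> g) = cmod (\<chi> \<one>\<^bsub>G\<^esub>)}"

definition char_ker :: "('a, 'b) monoid_scheme \<Rightarrow> ('a \<Rightarrow> complex) \<Rightarrow> 'a set" where
  "char_ker G \<chi> = {g \<in> carrier G. \<chi> g = \<chi> \<one>\<^bsub>G\<^esub>}"

definition group_center :: "('a, 'b) monoid_scheme \<Rightarrow> 'a set" where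
  "group_center G = {z \<in> carrier G. \<forall>g \<in> carrier G. z \<otimes>\<^bsub>G\<^esub> g = g \<otimes>\<^bsub>G\<^esub> z}"

definition GVZ :: "('a, 'b) monoid_scheme \<Rightarrow> bool" where
  "GVZ G \<longleftrightarrow> (\<forall>\<chi> \<in> Irr G. \<forall>g \<in> carrier G - char_center G \<chi>. \<chi> g = 0)"

definition K_grp :: "('a, 'b) monoid_scheme \<Rightarrow> 'a set" where
  "K_grp G = (if comm_group G then carrier G
     else carrier G \<inter> (\<Inter>{char_ker G \<chi> | \<chi>. \<chi> \<in> Irr G \<and> group_center G \<subset> char_center G \<chi>}))"

definition Irr_rel :: "('a, 'b) monoid_scheme \<Rightarrow> 'a set \<Rightarrow> ('a \<Rightarrow> complex) set" where
  "Irr_rel G H = {\<chi> \<in> Irr G. \<not> H \<subseteq> char_ker G \<chi>}"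

(* V(G|H): subgroup generated by elements on which some chi in Irr(G|H) is nonzero;
   for H = 1 the generating set is empty, so V(G|1) = 1 *)
definition V_rel :: "('a, 'b) monoid_scheme \<Rightarrow> 'a set \<Rightarrow> 'a set" where
  "V_rel G H = generate G {g \<in> carrier G. \<exists>\<chi> \<in> Irr_rel G H. \<chi> g \<noteq> 0}"

(* U(G|N): product of all normal subgroups H with V(G|H) <= N,
   i.e. the subgroup generated by their union *)
definition U_rel :: "('a, 'b) monoid_scheme \<Rightarrow> 'a set \<Rightarrow> 'a set" where
  "U_rel G N = generate G (\<Union>{H. H \<lhd> G \<and> V_rel G H \<subseteq> N})"

definition U_grp :: "('a, 'b) monoid_scheme \<Rightarrow> 'a set" where
  "U_grp G = U_rel G (group_center G)"

definition nilpotent_class2 :: "('a, 'b) monoid_scheme \<Rightarrow> bool" where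
  "nilpotent_class2 G \<longleftrightarrow> \<not> comm_group G \<and> derived G (carrier G) \<subseteq> group_center G"

end

theory Submission
  imports Defs "Jordan_Normal_Form.Spectral_Radius"
begin

text \<open>
  By Schur's lemma every \<open>\<chi> \<in> Irr(G)\<close> satisfies \<open>Z(G) \<le> Z(\<chi>)\<close>, and \<open>\<chi>\<close> has no zeros on
  \<open>Z(\<chi>)\<close>. So if \<open>H \<unlhd> G\<close> has \<open>V(G|H) \<le> Z(G)\<close>, no \<open>\<chi>\<close> with \<open>Z(\<chi>) > Z(G)\<close> lies in
  \<open>Irr(G|H)\<close>, i.e. \<open>H \<le> K(G)\<close>; as \<open>K(G)\<close> is normal, \<open>U(G) \<le> K(G)\<close>. Conversely every
  \<open>\<chi> \<in> Irr(G|K(G))\<close> has \<open>Z(\<chi>) = Z(G)\<close>, so in a GVZ-group it vanishes off \<open>Z(G)\<close>; hence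
  \<open>V(G|K(G)) \<le> Z(G)\<close> and \<open>K(G) \<le> U(G)\<close>. Normality of \<open>K(G)\<close> needs \<open>ker \<chi> = ker \<rho>\<close>, i.e. that a
  matrix of finite order with trace equal to its degree is the identity (Jordan normal form).
  Groups of class 2 are GVZ: if \<open>\<chi>(g) \<noteq> 0\<close>, each commutator \<open>[h, g]\<close> is central, acts by a scalar
  and preserves the trace of \<open>\<rho>(g)\<close>, so acts trivially; hence \<open>\<rho>(g)\<close> commutes with \<open>\<rho>(G)\<close> and
  \<open>g \<in> Z(\<chi>)\<close>.
\<close>

section \<open>Matrices of finite order\<close>

lemma mat_trace_mult_comm:
  assumes "A \<in> carrier_mat n m" "B \<in> carrier_mat m n"
  shows "mat_trace (A * B) = mat_trace (B * A)"
proof -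
  have "mat_trace (A * B) = (\<Sum>i<n. \<Sum>k<m. A $$ (i,k) * B $$ (k,i))"
    using assms unfolding mat_trace_def
    by (auto simp: scalar_prod_def lessThan_atLeast0 intro!: sum.cong)
  also have "\<dots> = (\<Sum>k<m. \<Sum>i<n. B $$ (k,i) * A $$ (i,k))"
    by (subst sum.swap) (simp add: mult.commute)
  also have "\<dots> = mat_trace (B * A)"
    using assms unfolding mat_trace_def
    by (auto simp: scalar_prod_def lessThan_atLeast0 intro!: sum.cong)
  finally show ?thesis .
qed

lemma mat_trace_smult: "A \<in> carrier_mat n n \<Longrightarrow> mat_trace (c \<cdot>\<^sub>m A) = c * mat_trace A"
  unfolding mat_trace_def by (auto simp: sum_distrib_left)

lemma mat_trace_one [simp]: "mat_trace (1\<^sub>m n) = of_nat n"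
  unfolding mat_trace_def by simp

lemma similar_mat_wit_mat_trace:
  assumes "similar_mat_wit A B P Q"
  shows "mat_trace A = mat_trace B"
proof -
  obtain n where PQ: "Q * P = 1\<^sub>m n" and A: "A = P * B * Q"
    and B: "B \<in> carrier_mat n n" and P: "P \<in> carrier_mat n n" and Q: "Q \<in> carrier_mat n n"
    using similar_mat_witD[OF refl assms] by blast
  have "mat_trace A = mat_trace (Q * (P * B))"
    unfolding A using B P Q by (intro mat_trace_mult_comm[of _ n n]) auto
  also have "Q * (P * B) = (Q * P) * B"
    by (rule assoc_mult_mat[OF Q P B, symmetric])
  finally show ?thesis using PQ B by simp
qed

lemma smult_one_mat_pow: "(c \<cdot>\<^sub>m 1\<^sub>m n) ^\<^sub>m k = (c ^ k) \<cdot>\<^sub>m (1\<^sub>m n :: 'a :: comm_ring_1 mat)"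
  by (induction k) (auto intro!: eq_matI)

lemma jordan_matrix_pow_eq_oneD:
  fixes n_as :: "(nat \<times> 'a :: {idom, ring_char_0}) list"
  assumes "0 \<notin> fst ` set n_as" "m > 0"
    and "jordan_matrix n_as ^\<^sub>m m = 1\<^sub>m (sum_list (map fst n_as))"
  shows "\<forall>(k, a) \<in> set n_as. k = 1 \<and> a ^ m = 1"
  using assms
proof (induction n_as)
  case Nil
  then show ?case by simp
next
  case (Cons ka rest)
  obtain k a where ka: "ka = (k, a)" by force
  let ?N = "sum_list (map fst rest)"
  let ?R = "jordan_matrix rest ^\<^sub>m m"
  have k0: "k \<noteq> 0" using Cons.prems ka by auto
  have "jordan_matrix (ka # rest) ^\<^sub>m m
      = four_block_mat (jordan_block k a ^\<^sub>m m) (0\<^sub>m k ?N) (0\<^sub>m ?N k) ?R"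
    unfolding jordan_matrix_pow ka by (simp add: jordan_matrix_pow[symmetric] Let_def)
  then have "four_block_mat (jordan_block k a ^\<^sub>m m) (0\<^sub>m k ?N) (0\<^sub>m ?N k) ?R = 1\<^sub>m (k + ?N)"
    using Cons.prems(3) ka by simp
  from arg_cong[OF this, of "\<lambda>M. M $$ (i, j)" for i j]
  have entry: "four_block_mat (jordan_block k a ^\<^sub>m m) (0\<^sub>m k ?N) (0\<^sub>m ?N k) ?R $$ (i, j)
      = 1\<^sub>m (k + ?N) $$ (i, j)" for i j .
  have a: "a ^ m = 1" using entry[of 0 0] k0 by (simp add: jordan_block_pow)
  have k: "k = 1"
  proof (rule ccontr)
    \<comment> \<open>otherwise the \<open>(0, 1)\<close> entry of the block power is \<open>m a\<^sup>m\<^sup>-\<^sup>1 \<noteq> 0\<close>\<close>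
    assume "k \<noteq> 1"
    then have "of_nat m * a ^ (m - 1) = 0"
      using entry[of 0 1] k0 by (simp add: jordan_block_pow)
    then have "a = 0" using \<open>m > 0\<close> by simp
    then show False using a \<open>m > 0\<close> by (simp add: zero_power)
  qed
  have "?R = 1\<^sub>m ?N"
  proof (rule eq_matI)
    fix i j assume "i < dim_row (1\<^sub>m ?N)" "j < dim_col (1\<^sub>m ?N)"
    then show "?R $$ (i, j) = 1\<^sub>m ?N $$ (i, j)" using entry[of "k + i" "k + j"] \<open>m > 0\<close> by simp
  qed auto
  moreover have "0 \<notin> fst ` set rest" using Cons.prems(1) by auto
  ultimately have "\<forall>(k, a) \<in> set rest. k = 1 \<and> a ^ m = 1"
    using Cons.IH \<open>m > 0\<close> by blast
  then show ?case by (simp add: ka k a)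
qed

lemma jordan_matrix_unit_blocks:
  assumes "\<forall>(k, a) \<in> set n_as. k = 1"
  shows "jordan_matrix n_as =
    mat (length n_as) (length n_as) (\<lambda>(i, j). if i = j then snd (n_as ! i) else 0)"
  using assms
proof (induction n_as)
  case Nil
  then show ?case by (auto simp: jordan_matrix_def)
next
  case (Cons ka rest)
  obtain a where ka: "ka = (1, a)" using Cons.prems by (cases ka) auto
  have len: "sum_list (map fst rest) = length rest"
    using Cons.prems by (induction rest) auto
  have IH: "jordan_matrix rest =
      mat (length rest) (length rest) (\<lambda>(i, j). if i = j then snd (rest ! i) else 0)"
    using Cons by auto
  show ?case
    unfolding ka jordan_matrix_Cons len by (rule eq_matI) (auto simp: IH nth_Cons')
qed

lemma sum_unimodular_eq_card_imp_one:
  fixes a :: "nat \<Rightarrow> complex"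
  assumes norm: "\<And>i. i < n \<Longrightarrow> cmod (a i) = 1" and sum: "(\<Sum>i<n. a i) = of_nat n"
    and "i < n"
  shows "a i = 1"
proof -
  have Re_le: "Re (a j) \<le> 1" if "j < n" for j
    using norm[OF that] complex_Re_le_cmod[of "a j"] by simp
  have "(\<Sum>j<n. 1 - Re (a j)) = 0"
    using arg_cong[OF sum, of Re] by (simp add: Re_sum sum_subtractf)
  then have "Re (a i) = 1"
    using Re_le \<open>i < n\<close> by (subst (asm) sum_nonneg_eq_0_iff) auto
  moreover have "Re (a i) ^ 2 + Im (a i) ^ 2 = 1"
    using norm[OF \<open>i < n\<close>] by (simp add: cmod_def)
  ultimately show ?thesis by (simp add: complex_eq_iff)
qed

text \<open>The Jordan form \<open>J\<close> of a matrix of finite order is diagonal with roots of unity on the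
  diagonal, and these sum to \<open>n\<close> only if they are all \<open>1\<close>.\<close>

lemma mat_eq_one_if_pow_eq_one_trace_eq_dim:
  fixes A :: "complex mat"
  assumes A: "A \<in> carrier_mat n n" and "m > 0" and pow: "A ^\<^sub>m m = 1\<^sub>m n"
    and trace: "mat_trace A = of_nat n"
  shows "A = 1\<^sub>m n"
proof -
  obtain as where "char_poly A = (\<Prod>a \<leftarrow> as. [:- a, 1:])"
    using char_poly_factorized[OF A] by auto
  from jordan_nf_exists[OF A this] obtain n_as where "jordan_nf A n_as" by auto
  then obtain P Q where nz: "0 \<notin> fst ` set n_as"
    and wit: "similar_mat_wit A (jordan_matrix n_as) P Q"
    unfolding jordan_nf_def similar_mat_def by auto
  let ?J = "jordan_matrix n_as"
  from similar_mat_witD2[OF A wit] have J: "?J \<in> carrier_mat n n"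
    and P: "P \<in> carrier_mat n n" and Q: "Q \<in> carrier_mat n n"
    and PQ: "P * Q = 1\<^sub>m n" and QP: "Q * P = 1\<^sub>m n" and AJ: "A = P * ?J * Q"
    by auto
  have dim: "sum_list (map fst n_as) = n"
    using J by (metis carrier_matD(1) jordan_matrix_dim(1))
  have "?J ^\<^sub>m m = Q * A ^\<^sub>m m * P"
    by (rule similar_mat_wit_pow_id[OF similar_mat_wit_sym[OF wit]])
  also have "\<dots> = 1\<^sub>m (sum_list (map fst n_as))"
    using pow P Q QP dim by simp
  finally have blocks: "\<forall>(k, a) \<in> set n_as. k = 1 \<and> a ^ m = 1"
    using jordan_matrix_pow_eq_oneD[OF nz \<open>m > 0\<close>] by blast
  have "sum_list (map fst n_as) = length n_as"
    using blocks by (induction n_as) auto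
  with dim have len: "length n_as = n" by simp
  have diag: "?J = mat n n (\<lambda>(i, j). if i = j then snd (n_as ! i) else 0)"
    using jordan_matrix_unit_blocks[of n_as] blocks len by auto
  have norm: "cmod (snd (n_as ! i)) = 1" if "i < n" for i
  proof -
    have "snd (n_as ! i) ^ m = 1"
      using blocks nth_mem[of i n_as] that len by (cases "n_as ! i") fastforce
    then show ?thesis using power_eq_1_iff \<open>m > 0\<close> by blast
  qed
  have "mat_trace ?J = of_nat n"
    using trace similar_mat_wit_mat_trace[OF wit] by simp
  then have "(\<Sum>i<n. snd (n_as ! i)) = of_nat n"
    unfolding diag mat_trace_def by simp
  then have one: "snd (n_as ! i) = 1" if "i < n" for i
    using sum_unimodular_eq_card_imp_one[of n "\<lambda>i. snd (n_as ! i)"] norm that by blast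
  have "?J = 1\<^sub>m n" unfolding diag by (rule eq_matI) (auto simp: one)
  then show ?thesis using AJ PQ P Q by simp
qed

section \<open>Schur's lemma\<close>

lemma invariant_subspace_eigenspace:
  assumes A: "A \<in> carrier_mat n n"
    and rho: "\<And>h. h \<in> carrier G \<Longrightarrow> \<rho> h \<in> carrier_mat n n"
    and comm: "\<And>h. h \<in> carrier G \<Longrightarrow> \<rho> h * A = A * \<rho> h"
  shows "invariant_subspace G n \<rho> {w \<in> carrier_vec n. A *\<^sub>v w = c \<cdot>\<^sub>v w}"
    (is "invariant_subspace G n \<rho> ?W")
  unfolding invariant_subspace_def
proof (intro conjI ballI allI)
  fix v w assume "v \<in> ?W" "w \<in> ?W"
  then show "v + w \<in> ?W"
    using A by (auto simp: mult_add_distrib_mat_vec smult_add_distrib_vec)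
next
  fix d w assume "w \<in> ?W"
  then show "d \<cdot>\<^sub>v w \<in> ?W"
    using A by (auto simp: mult_mat_vec smult_smult_assoc mult.commute)
next
  fix h w assume h: "h \<in> carrier G" and "w \<in> ?W"
  then have w: "w \<in> carrier_vec n" "A *\<^sub>v w = c \<cdot>\<^sub>v w" by auto
  have "A *\<^sub>v (\<rho> h *\<^sub>v w) = (\<rho> h * A) *\<^sub>v w" using A rho[OF h] w comm[OF h] by simp
  also have "\<dots> = c \<cdot>\<^sub>v (\<rho> h *\<^sub>v w)" using A rho[OF h] w by (simp add: mult_mat_vec)
  finally show "\<rho> h *\<^sub>v w \<in> ?W" using rho[OF h] w by auto
qed (use A in auto)

text \<open>Some eigenspace of \<open>A\<close> is a nonzero invariant subspace, hence everything.\<close>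

lemma irreducible_rep_commuting_scalar:
  assumes irr: "irreducible_rep G n \<rho>" and A: "A \<in> carrier_mat n n"
    and comm: "\<And>h. h \<in> carrier G \<Longrightarrow> \<rho> h * A = A * \<rho> h"
  shows "\<exists>c. A = c \<cdot>\<^sub>m 1\<^sub>m n"
proof -
  have rho: "\<And>h. h \<in> carrier G \<Longrightarrow> \<rho> h \<in> carrier_mat n n" and "n > 0"
    using irr unfolding irreducible_rep_def is_rep_def by auto
  obtain c where "c \<in> spectrum A" using spectrum_non_empty[OF A \<open>n > 0\<close>] by auto
  then obtain v where v: "v \<in> carrier_vec n" "v \<noteq> 0\<^sub>v n" "A *\<^sub>v v = c \<cdot>\<^sub>v v"
    using A unfolding spectrum_def eigenvalue_def eigenvector_def by auto
  let ?W = "{w \<in> carrier_vec n. A *\<^sub>v w = c \<cdot>\<^sub>v w}"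
  have "?W = carrier_vec n"
    using irr invariant_subspace_eigenspace[where G = G and \<rho> = \<rho> and c = c, OF A rho comm] v
    unfolding irreducible_rep_def by blast
  then have eigen: "A *\<^sub>v unit_vec n j = c \<cdot>\<^sub>v unit_vec n j" for j
    using unit_vec_carrier by blast
  have "A = c \<cdot>\<^sub>m 1\<^sub>m n"
  proof (rule eq_matI)
    fix i j assume "i < dim_row (c \<cdot>\<^sub>m 1\<^sub>m n)" "j < dim_col (c \<cdot>\<^sub>m 1\<^sub>m n)"
    then show "A $$ (i, j) = (c \<cdot>\<^sub>m 1\<^sub>m n) $$ (i, j)"
      using arg_cong[OF eigen[of j], of "\<lambda>x. x $ i"] A by (auto simp: mult_mat_vec_def)
  qed (use A in auto)
  then show ?thesis by blast
qed

section \<open>Representations and their characters\<close>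

definition character :: "('a, 'b) monoid_scheme \<Rightarrow> ('a \<Rightarrow> complex mat) \<Rightarrow> 'a \<Rightarrow> complex" where
  "character G \<rho> g = (if g \<in> carrier G then mat_trace (\<rho> g) else 0)"

lemma Irr_eq: "Irr G = {character G \<rho> | n \<rho>. irreducible_rep G n \<rho>}"
  unfolding Irr_def character_def by blast

locale group_rep = group G for G (structure) +
  fixes n :: nat and \<rho> :: "'a \<Rightarrow> complex mat"
  assumes is_rep: "is_rep G n \<rho>"
begin

lemma rep_carrier [simp]: "g \<in> carrier G \<Longrightarrow> \<rho> g \<in> carrier_mat n n"
  using is_rep unfolding is_rep_def by auto

lemma rep_dim [simp]: "g \<in> carrier G \<Longrightarrow> dim_row (\<rho> g) = n" "g \<in> carrier G \<Longrightarrow> dim_col (\<rho> g) = n"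
  using rep_carrier by blast+

lemma rep_mult: "g \<in> carrier G \<Longrightarrow> h \<in> carrier G \<Longrightarrow> \<rho> (g \<otimes> h) = \<rho> g * \<rho> h"
  using is_rep unfolding is_rep_def by auto

lemma rep_one [simp]: "\<rho> \<one> = 1\<^sub>m n"
  using is_rep unfolding is_rep_def by auto

lemma rep_inv_mult [simp]: "g \<in> carrier G \<Longrightarrow> \<rho> (inv g) * \<rho> g = 1\<^sub>m n"
  by (metis inv_closed l_inv rep_mult rep_one)

lemma rep_mult_inv [simp]: "g \<in> carrier G \<Longrightarrow> \<rho> g * \<rho> (inv g) = 1\<^sub>m n"
  by (metis inv_closed r_inv rep_mult rep_one)

lemma rep_pow: "g \<in> carrier G \<Longrightarrow> \<rho> (g [^] (k :: nat)) = \<rho> g ^\<^sub>m k"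
proof (induction k)
  case 0
  then show ?case by simp
next
  case (Suc k)
  then show ?case by (simp add: rep_mult)
qed

lemma rep_pow_order: "g \<in> carrier G \<Longrightarrow> \<rho> g ^\<^sub>m Coset.order G = 1\<^sub>m n"
  using rep_pow[of g "Coset.order G"] by (simp add: pow_order_eq_1)

lemma similar_mat_wit_rep_conj:
  assumes "g \<in> carrier G" "h \<in> carrier G"
  shows "similar_mat_wit (\<rho> (h \<otimes> g \<otimes> inv h)) (\<rho> g) (\<rho> h) (\<rho> (inv h))"
proof -
  have "\<rho> (h \<otimes> g \<otimes> inv h) = \<rho> h * \<rho> g * \<rho> (inv h)"
    using assms by (simp add: rep_mult)
  then show ?thesis
    using assms unfolding similar_mat_wit_def Let_def by (auto intro!: mult_carrier_mat)
qed

lemma rep_kernel_normal: "{g \<in> carrier G. \<rho> g = 1\<^sub>m n} \<lhd> G"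
proof (rule normal_invI)
  have "\<rho> (inv g) = 1\<^sub>m n" if "g \<in> carrier G" "\<rho> g = 1\<^sub>m n" for g
    using rep_inv_mult[of g] that by simp
  then show "subgroup {g \<in> carrier G. \<rho> g = 1\<^sub>m n} G"
    by (intro subgroupI) (auto simp: rep_mult)
next
  fix x h assume "x \<in> carrier G" "h \<in> {g \<in> carrier G. \<rho> g = 1\<^sub>m n}"
  then show "x \<otimes> h \<otimes> inv x \<in> {g \<in> carrier G. \<rho> g = 1\<^sub>m n}"
    by (simp add: rep_mult)
qed

lemma character_one [simp]: "character G \<rho> \<one> = of_nat n"
  by (simp add: character_def)

lemma char_ker_character:
  assumes "finite (carrier G)"
  shows "char_ker G (character G \<rho>) = {g \<in> carrier G. \<rho> g = 1\<^sub>m n}"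
proof -
  have order: "Coset.order G > 0" using assms order_gt_0_iff_finite by blast
  have "\<rho> g = 1\<^sub>m n \<longleftrightarrow> mat_trace (\<rho> g) = of_nat n" if g: "g \<in> carrier G" for g
    using mat_eq_one_if_pow_eq_one_trace_eq_dim[OF rep_carrier[OF g] order rep_pow_order[OF g]]
    by auto
  then show ?thesis unfolding char_ker_def character_def by auto
qed

end

locale finite_group_irrep = group_rep +
  assumes finite_carrier: "finite (carrier G)"
    and irreducible: "irreducible_rep G n \<rho>"
begin

lemma dim_pos: "n > 0"
  using irreducible unfolding irreducible_rep_def by simp

lemma rep_scalar_if_commuting:
  assumes g: "g \<in> carrier G" and comm: "\<And>h. h \<in> carrier G \<Longrightarrow> \<rho> h * \<rho> g = \<rho> g * \<rho> h"
  shows "\<exists>c. \<rho> g = c \<cdot>\<^sub>m 1\<^sub>m n \<and> cmod c = 1"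
proof -
  obtain c where c: "\<rho> g = c \<cdot>\<^sub>m 1\<^sub>m n"
    using irreducible_rep_commuting_scalar[OF irreducible rep_carrier[OF g] comm] by blast
  have "(c ^ Coset.order G \<cdot>\<^sub>m 1\<^sub>m n) $$ (0, 0) = (1\<^sub>m n :: complex mat) $$ (0, 0)"
    using rep_pow_order[OF g] by (simp add: c smult_one_mat_pow)
  then have "c ^ Coset.order G = 1" using dim_pos by simp
  moreover have "Coset.order G > 0" using finite_carrier order_gt_0_iff_finite by blast
  ultimately have "cmod c = 1" using power_eq_1_iff by fastforce
  with c show ?thesis by blast
qed

lemma char_center_if_commuting:
  assumes "g \<in> carrier G" and "\<And>h. h \<in> carrier G \<Longrightarrow> \<rho> h * \<rho> g = \<rho> g * \<rho> h"
  shows "g \<in> char_center G (character G \<rho>)"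
proof -
  obtain c where "\<rho> g = c \<cdot>\<^sub>m 1\<^sub>m n" "cmod c = 1"
    using rep_scalar_if_commuting assms by blast
  with assms(1) show ?thesis
    by (simp add: char_center_def character_def mat_trace_smult[of _ n] norm_mult)
qed

lemma rep_commutes_if_central:
  assumes "z \<in> group_center G" "h \<in> carrier G"
  shows "\<rho> h * \<rho> z = \<rho> z * \<rho> h"
  using assms unfolding group_center_def by (metis (mono_tags, lifting) mem_Collect_eq rep_mult)

lemma group_center_subset_char_center: "group_center G \<subseteq> char_center G (character G \<rho>)"
  using char_center_if_commuting rep_commutes_if_central
  unfolding group_center_def by blast

lemma character_nonzero_on_char_center:
  "g \<in> char_center G (character G \<rho>) \<Longrightarrow> character G \<rho> g \<noteq> 0"
  using dim_pos by (auto simp: char_center_def)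

lemma rep_commutes_if_trace_nonzero:
  assumes class2: "derived G (carrier G) \<subseteq> group_center G"
    and g: "g \<in> carrier G" and h: "h \<in> carrier G" and trace: "mat_trace (\<rho> g) \<noteq> 0"
  shows "\<rho> h * \<rho> g = \<rho> g * \<rho> h"
proof -
  define c where "c = h \<otimes> g \<otimes> inv h \<otimes> inv g"
  have "c \<in> derived G (carrier G)"
    unfolding derived_def c_def using g h by (blast intro: generate.incl)
  with class2 have "c \<in> group_center G" by blast
  then obtain \<mu> where \<mu>: "\<rho> c = \<mu> \<cdot>\<^sub>m 1\<^sub>m n"
    using rep_scalar_if_commuting rep_commutes_if_central unfolding group_center_def by blast
  have conj: "h \<otimes> g \<otimes> inv h = c \<otimes> g"
    unfolding c_def using g h by (simp add: m_assoc)
  have "c \<in> carrier G" unfolding c_def using g h by simp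
  with conj g have "\<rho> (h \<otimes> g \<otimes> inv h) = \<rho> c * \<rho> g" by (simp add: rep_mult)
  then have conj_scalar: "\<rho> (h \<otimes> g \<otimes> inv h) = \<mu> \<cdot>\<^sub>m \<rho> g"
    using g by (simp add: \<mu> mult_smult_assoc_mat[of _ n n _ n])
  have "mat_trace (\<rho> g) = \<mu> * mat_trace (\<rho> g)"
    using similar_mat_wit_mat_trace[OF similar_mat_wit_rep_conj[OF g h]]
    by (simp add: conj_scalar mat_trace_smult[of _ n] g)
  with trace have "\<mu> = 1" by simp
  then have "\<rho> (h \<otimes> g \<otimes> inv h) = \<rho> g" using conj_scalar by (auto intro!: eq_matI)
  then have "\<rho> (h \<otimes> g) = \<rho> g * \<rho> h"
    using g h by (metis inv_closed m_assoc m_closed l_inv r_one rep_mult)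
  with g h show ?thesis by (simp add: rep_mult)
qed

lemma character_vanishes_off_char_center_if_class2:
  assumes "derived G (carrier G) \<subseteq> group_center G" and "g \<in> carrier G - char_center G (character G \<rho>)"
  shows "character G \<rho> g = 0"
  using assms char_center_if_commuting rep_commutes_if_trace_nonzero
  by (auto simp: character_def)

end

section \<open>The subgroups \<open>U(G)\<close> and \<open>K(G)\<close>\<close>

lemma IrrE:
  assumes "group G" "finite (carrier G)" "\<chi> \<in> Irr G"
  obtains n \<rho> where "finite_group_irrep G n \<rho>" "\<chi> = character G \<rho>"
proof -
  obtain n \<rho> where irr: "irreducible_rep G n \<rho>" and \<chi>: "\<chi> = character G \<rho>"
    using assms(3) unfolding Irr_eq by blast
  have "is_rep G n \<rho>" using irr unfolding irreducible_rep_def by simp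
  with assms(1,2) irr have "finite_group_irrep G n \<rho>"
    by (intro finite_group_irrep.intro group_rep.intro group_rep_axioms.intro
        finite_group_irrep_axioms.intro)
  then show thesis using \<chi> by (rule that)
qed

context group
begin

lemma group_center_subgroup: "subgroup (group_center G) G"
proof (rule subgroupI)
  fix a b assume "a \<in> group_center G" "b \<in> group_center G"
  then have a: "a \<in> carrier G" "\<And>g. g \<in> carrier G \<Longrightarrow> a \<otimes> g = g \<otimes> a"
    and b: "b \<in> carrier G" "\<And>g. g \<in> carrier G \<Longrightarrow> b \<otimes> g = g \<otimes> b"
    unfolding group_center_def by auto
  have "inv a \<otimes> g = g \<otimes> inv a" if g: "g \<in> carrier G" for g
  proof -
    have "inv a \<otimes> g = inv a \<otimes> (g \<otimes> a) \<otimes> inv a" using a(1) g by (simp add: m_assoc)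
    also have "\<dots> = inv a \<otimes> (a \<otimes> g) \<otimes> inv a" using a(2)[OF g] by simp
    also have "\<dots> = g \<otimes> inv a" using a(1) g by (simp add: m_assoc[symmetric])
    finally show ?thesis .
  qed
  then show "inv a \<in> group_center G" using a(1) unfolding group_center_def by simp
  have "a \<otimes> b \<otimes> g = g \<otimes> (a \<otimes> b)" if g: "g \<in> carrier G" for g
  proof -
    have "a \<otimes> b \<otimes> g = a \<otimes> (g \<otimes> b)" using a(1) b g by (simp add: m_assoc)
    also have "\<dots> = (a \<otimes> g) \<otimes> b" using a(1) b(1) g by (simp add: m_assoc)
    also have "\<dots> = g \<otimes> (a \<otimes> b)" using a b(1) g by (simp add: m_assoc)
    finally show ?thesis .
  qed
  then show "a \<otimes> b \<in> group_center G" using a(1) b(1) unfolding group_center_def by simp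
qed (auto simp: group_center_def)

lemma normal_carrier_Inter:
  assumes "\<And>H. H \<in> F \<Longrightarrow> H \<lhd> G"
  shows "carrier G \<inter> \<Inter>F \<lhd> G"
proof (cases "F = {}")
  case True
  then show ?thesis using normal_self by simp
next
  case False
  have sub: "\<And>H. H \<in> F \<Longrightarrow> subgroup H G" using assms normal_imp_subgroup by blast
  then have "carrier G \<inter> \<Inter>F = \<Inter>F" using False subgroup.subset by blast
  moreover have "\<Inter>F \<lhd> G"
    using subgroups_Inter[OF sub False] assms normal_inv_iff by (intro normal_invI) blast+
  ultimately show ?thesis by simp
qed

context
  assumes finite: "finite (carrier G)"
begin

lemma Irr_char_ker_normal:
  assumes "\<chi> \<in> Irr G"
  shows "char_ker G \<chi> \<lhd> G"
proof -
  obtain n \<rho> where irrep: "finite_group_irrep G n \<rho>" and \<chi>: "\<chi> = character G \<rho>"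
    using IrrE[OF is_group finite assms] .
  interpret finite_group_irrep G n \<rho> by (rule irrep)
  show ?thesis unfolding \<chi> char_ker_character[OF finite] by (rule rep_kernel_normal)
qed

lemma Irr_group_center_subset_char_center:
  assumes "\<chi> \<in> Irr G"
  shows "group_center G \<subseteq> char_center G \<chi>"
proof -
  obtain n \<rho> where irrep: "finite_group_irrep G n \<rho>" and \<chi>: "\<chi> = character G \<rho>"
    using IrrE[OF is_group finite assms] .
  interpret finite_group_irrep G n \<rho> by (rule irrep)
  show ?thesis unfolding \<chi> by (rule group_center_subset_char_center)
qed

lemma Irr_nonzero_on_char_center:
  assumes "\<chi> \<in> Irr G" "g \<in> char_center G \<chi>"
  shows "\<chi> g \<noteq> 0"
proof -
  obtain n \<rho> where irrep: "finite_group_irrep G n \<rho>" and \<chi>: "\<chi> = character G \<rho>"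
    using IrrE[OF is_group finite assms(1)] .
  interpret finite_group_irrep G n \<rho> by (rule irrep)
  show ?thesis using assms(2) unfolding \<chi> by (rule character_nonzero_on_char_center)
qed

lemma nilpotent_class2_imp_GVZ:
  assumes "nilpotent_class2 G"
  shows "GVZ G"
  unfolding GVZ_def
proof (intro ballI)
  fix \<chi> g assume "\<chi> \<in> Irr G" and g: "g \<in> carrier G - char_center G \<chi>"
  then obtain n \<rho> where irrep: "finite_group_irrep G n \<rho>" and \<chi>: "\<chi> = character G \<rho>"
    using IrrE[OF is_group finite] by blast
  interpret finite_group_irrep G n \<rho> by (rule irrep)
  show "\<chi> g = 0"
    using assms g unfolding \<chi> nilpotent_class2_def
    by (intro character_vanishes_off_char_center_if_class2) auto
qed

lemma K_grp_normal: "K_grp G \<lhd> G"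
  unfolding K_grp_def using normal_self by (auto intro!: normal_carrier_Inter Irr_char_ker_normal)

lemma char_center_subset_V_rel: "\<chi> \<in> Irr_rel G H \<Longrightarrow> char_center G \<chi> \<subseteq> V_rel G H"
  unfolding V_rel_def Irr_rel_def char_center_def
  using Irr_nonzero_on_char_center[unfolded char_center_def]
  by (blast intro: generate.incl)

lemma normal_subset_K_grp_if_V_rel_central:
  assumes H: "H \<lhd> G" and V: "V_rel G H \<subseteq> group_center G"
  shows "H \<subseteq> K_grp G"
proof (cases "comm_group G")
  case True
  then show ?thesis
    using normal_imp_subgroup[OF H] subgroup.subset unfolding K_grp_def by auto
next
  case False
  have "H \<subseteq> char_ker G \<chi>" if "\<chi> \<in> Irr G" "group_center G \<subset> char_center G \<chi>" for \<chi>
  proof (rule ccontr)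
    assume "\<not> H \<subseteq> char_ker G \<chi>"
    with \<open>\<chi> \<in> Irr G\<close> have "char_center G \<chi> \<subseteq> V_rel G H"
      by (intro char_center_subset_V_rel) (simp add: Irr_rel_def)
    with V that(2) show False by blast
  qed
  moreover have "H \<subseteq> carrier G" using normal_imp_subgroup[OF H] subgroup.subset by blast
  ultimately show ?thesis using False unfolding K_grp_def by auto
qed

lemma U_grp_subset_K_grp: "U_grp G \<subseteq> K_grp G"
  unfolding U_grp_def U_rel_def
  using normal_subset_K_grp_if_V_rel_central normal_imp_subgroup[OF K_grp_normal]
  by (intro generate_subgroup_incl) auto

lemma V_rel_K_grp_subset_group_center:
  assumes "GVZ G"
  shows "V_rel G (K_grp G) \<subseteq> group_center G"
  unfolding V_rel_def
proof (intro generate_subgroup_incl[OF _ group_center_subgroup] subsetI)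
  fix g assume "g \<in> {g \<in> carrier G. \<exists>\<chi> \<in> Irr_rel G (K_grp G). \<chi> g \<noteq> 0}"
  then obtain \<chi> where g: "g \<in> carrier G" and \<chi>: "\<chi> \<in> Irr G" and nz: "\<chi> g \<noteq> 0"
    and not_ker: "\<not> K_grp G \<subseteq> char_ker G \<chi>"
    unfolding Irr_rel_def by blast
  show "g \<in> group_center G"
  proof (cases "comm_group G")
    case True
    then interpret comm_group G .
    show ?thesis using g m_comm unfolding group_center_def by blast
  next
    case False
    with \<chi> not_ker have "\<not> group_center G \<subset> char_center G \<chi>"
      unfolding K_grp_def by auto
    then have "char_center G \<chi> = group_center G"
      using Irr_group_center_subset_char_center[OF \<chi>] by blast
    moreover have "g \<in> char_center G \<chi>" using assms \<chi> g nz unfolding GVZ_def by blast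
    ultimately show ?thesis by simp
  qed
qed

lemma K_grp_subset_U_grp: "GVZ G \<Longrightarrow> K_grp G \<subseteq> U_grp G"
  unfolding U_grp_def U_rel_def
  using K_grp_normal V_rel_K_grp_subset_group_center by (blast intro: generate.incl)

end

end

theorem lemma6p14:
  fixes G :: "('a, 'b) monoid_scheme"
  assumes "group G" and "finite (carrier G)"
  shows "(GVZ G \<longrightarrow> U_grp G = K_grp G) \<and> (nilpotent_class2 G \<longrightarrow> U_grp G = K_grp G)"
proof -
  interpret group G by fact
  have "U_grp G = K_grp G" if "GVZ G"
    using U_grp_subset_K_grp K_grp_subset_U_grp assms(2) that by blast
  with nilpotent_class2_imp_GVZ assms(2) show ?thesis by blast
qed

end
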